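(* Let $\mathsf g_1$ and $\mathsf g_2$ be two $\mathrm{CAT}(0)$ metrics on a surface lying in the same conformal class. Then the averaged metric $\mathsf g=\tfrac12(\mathsf g_1+\mathsf g_2)$ is also $\mathrm{CAT}(0)$.
   Context: A $\mathrm{CAT}(0)$ metric on a surface means a metric which is smooth Riemannian with nonpositive Gaussian curvature away from finitely many singular points, near each of which, in a local conformal coordinate $z$, the metric has the form $e^{h(z)}|z|^{2\beta}|dz|^2$ with $\beta\ge 0$ (a conical point of total angle $2\pi(1+\beta)\ge 2\pi$). *)

theory Defs
  imports "HOL-Analysis.Analysis"
begin

definition pdir :: "complex \<Rightarrow> (complex \<Rightarrow> real) \<Rightarrow> complex \<Rightarrow> real" where
  "pdir v f z = (THE d. ((\<lambda>t. f (z + of_real t * v)) has_real_derivative d) (at 0))"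

fun iter_pd :: "complex list \<Rightarrow> (complex \<Rightarrow> real) \<Rightarrow> complex \<Rightarrow> real" where
  "iter_pd [] f = f"
| "iter_pd (v # vs) f = pdir v (iter_pd vs f)"

text \<open>C-infinity: all iterated partial derivatives (with respect to x = Re z and y = Im z)
  exist and are continuous on S.\<close>
definition smooth_on :: "complex set \<Rightarrow> (complex \<Rightarrow> real) \<Rightarrow> bool" where
  "smooth_on S f \<longleftrightarrow>
     (\<forall>vs. set vs \<subseteq> {1, \<i>} \<longrightarrow>
        continuous_on S (iter_pd vs f) \<and>
        (\<forall>v\<in>{1, \<i>}. \<forall>z\<in>S. (\<lambda>t. iter_pd vs f (z + of_real t * v)) differentiable (at 0)))"

definition laplacian :: "(complex \<Rightarrow> real) \<Rightarrow> complex \<Rightarrow> real" where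
  "laplacian u z = pdir 1 (pdir 1 u) z + pdir \<i> (pdir \<i> u) z"

text \<open>Gaussian curvature of the conformal metric rho |dz|^2: K = - Delta (log rho) / (2 rho).\<close>
definition gauss_curv :: "(complex \<Rightarrow> real) \<Rightarrow> complex \<Rightarrow> real" where
  "gauss_curv \<rho> z = - laplacian (\<lambda>w. ln (\<rho> w)) z / (2 * \<rho> z)"

text \<open>A CAT(0) metric rho |dz|^2 on the open set U of a conformal chart: smooth Riemannian
  with nonpositive Gaussian curvature off a finite set S of singular points, and near each
  singular point p of the form exp(h z) |z - p|^(2 beta) |dz|^2 with beta >= 0.\<close>
definition cat0_conformal_metric :: "complex set \<Rightarrow> (complex \<Rightarrow> real) \<Rightarrow> bool" where
  "cat0_conformal_metric U \<rho> \<longleftrightarrow>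
     (\<exists>S. finite S \<and> S \<subseteq> U \<and>
        (\<forall>z\<in>U - S. \<rho> z > 0) \<and>
        smooth_on (U - S) \<rho> \<and>
        (\<forall>z\<in>U - S. gauss_curv \<rho> z \<le> 0) \<and>
        (\<forall>p\<in>S. \<exists>\<beta>::real. \<beta> \<ge> 0 \<and> (\<exists>r>0. \<exists>h::complex \<Rightarrow> real.
            ball p r \<subseteq> U \<and> continuous_on (ball p r) h \<and>
            (\<forall>z\<in>ball p r - {p}. \<rho> z = exp (h z) * cmod (z - p) powr (2 * \<beta>)))))"

end

theory Submission
  imports Defs
begin

(* Off the union of the two singular sets both metrics are smooth and positive, and since
   Delta (log rho) = (rho Delta rho - |grad rho|^2) / rho^2, the condition K <= 0 reads
   |grad rho|^2 <= rho Delta rho. This is preserved by positive combinations a rho1 + b rho2,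
   by the identity
     (a g1 + b g2) (a |u1|^2 / g1 + b |u2|^2 / g2) = |a u1 + b u2|^2 + a b |g2 u1 - g1 u2|^2 / (g1 g2)
   applied to g_i = rho_i and u_i = grad rho_i.
   Near any point p each metric has the form exp(h_i) |z - p|^(2 beta_i) (with beta_i = 0 and
   h_i = log rho_i at regular points), and
     a exp(h1) |z - p|^(2 beta1) + b exp(h2) |z - p|^(2 beta2) = exp(h) |z - p|^(2 min beta1 beta2)
   with h continuous at p, because the term with the smaller exponent keeps the bracket positive. *)

lemma pdir_eqI:
  assumes "((\<lambda>t. f (z + of_real t * v)) has_real_derivative d) (at 0)"
  shows "pdir v f z = d"
  unfolding pdir_def using assms by (intro the_equality) (auto intro: DERIV_unique)

lemma has_real_derivative_pdir:
  assumes "(\<lambda>t. f (z + of_real t * v)) differentiable (at 0)"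
  shows "((\<lambda>t. f (z + of_real t * v)) has_real_derivative pdir v f z) (at 0)"
proof -
  obtain d where "((\<lambda>t. f (z + of_real t * v)) has_real_derivative d) (at 0)"
    using assms real_differentiable_def by blast
  then show ?thesis by (simp add: pdir_eqI)
qed

lemma eventually_line_in_open:
  fixes z v :: complex
  assumes "open T" "z \<in> T"
  shows "\<forall>\<^sub>F t in nhds 0. z + of_real t * v \<in> T"
proof -
  have "((\<lambda>t. z + of_real t * v) \<longlongrightarrow> z) (nhds 0)"
    unfolding tendsto_nhds_iff by (auto intro!: tendsto_eq_intros)
  then show ?thesis using assms by (rule topological_tendstoD)
qed

lemma DERIV_line_cong_open:
  fixes f g :: "complex \<Rightarrow> real"
  assumes "open T" "z \<in> T" "\<And>w. w \<in> T \<Longrightarrow> f w = g w"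
    and "((\<lambda>t. f (z + of_real t * v)) has_real_derivative d) (at 0)"
  shows "((\<lambda>t. g (z + of_real t * v)) has_real_derivative d) (at 0)"
proof -
  have eq: "\<forall>\<^sub>F t in nhds 0. f (z + of_real t * v) = g (z + of_real t * v)"
    using eventually_line_in_open[OF assms(1,2)] by (rule eventually_mono) (use assms(3) in blast)
  show ?thesis using DERIV_cong_ev[OF refl eq refl] assms(4) by simp
qed

lemma smooth_on_subset: "smooth_on A f \<Longrightarrow> B \<subseteq> A \<Longrightarrow> smooth_on B f"
  unfolding smooth_on_def by (meson continuous_on_subset subsetD)

lemma smooth_on_imp_continuous_on: "smooth_on S f \<Longrightarrow> continuous_on S f"
  unfolding smooth_on_def by (metis empty_subsetI iter_pd.simps(1) list.set(1))

lemma smooth_on_line_differentiable: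
  assumes "smooth_on S f" "set vs \<subseteq> {1, \<i>}" "v \<in> {1, \<i>}" "z \<in> S"
  shows "(\<lambda>t. iter_pd vs f (z + of_real t * v)) differentiable (at 0)"
  using assms unfolding smooth_on_def by blast

lemma has_line_derivative_lincomb:
  assumes "open T" "z \<in> T" "\<And>w. w \<in> T \<Longrightarrow> F w = a * f w + b * g w"
    and "(\<lambda>t. f (z + of_real t * v)) differentiable (at 0)"
    and "(\<lambda>t. g (z + of_real t * v)) differentiable (at 0)"
  shows "((\<lambda>t. F (z + of_real t * v)) has_real_derivative a * pdir v f z + b * pdir v g z) (at 0)"
proof (rule DERIV_line_cong_open[where f = "\<lambda>w. a * f w + b * g w", OF assms(1,2)])
  show "a * f w + b * g w = F w" if "w \<in> T" for w
    using assms(3) that by simp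
  show "((\<lambda>t. a * f (z + of_real t * v) + b * g (z + of_real t * v))
      has_real_derivative a * pdir v f z + b * pdir v g z) (at 0)"
    using has_real_derivative_pdir[OF assms(4)] has_real_derivative_pdir[OF assms(5)]
    by (auto intro!: derivative_eq_intros)
qed

lemma iter_pd_lincomb:
  assumes "open T" "smooth_on T f" "smooth_on T g" "set vs \<subseteq> {1, \<i>}" "z \<in> T"
  shows "iter_pd vs (\<lambda>w. a * f w + b * g w) z = a * iter_pd vs f z + b * iter_pd vs g z"
  using assms(4,5)
proof (induction vs arbitrary: z)
  case Nil
  then show ?case by simp
next
  case (Cons v vs)
  then have "((\<lambda>t. iter_pd vs (\<lambda>w. a * f w + b * g w) (z + of_real t * v)) has_real_derivative
      a * pdir v (iter_pd vs f) z + b * pdir v (iter_pd vs g) z) (at 0)"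
    by (intro has_line_derivative_lincomb[OF assms(1)] smooth_on_line_differentiable[OF assms(2)]
        smooth_on_line_differentiable[OF assms(3)]) auto
  then show ?case by (simp add: pdir_eqI)
qed

lemma smooth_on_lincomb:
  assumes "open T" "smooth_on T f" "smooth_on T g"
  shows "smooth_on T (\<lambda>w. a * f w + b * g w)"
  unfolding smooth_on_def
proof (intro allI impI conjI ballI)
  fix vs :: "complex list" assume vs: "set vs \<subseteq> {1, \<i>}"
  note lincomb = iter_pd_lincomb[OF assms vs]
  have "continuous_on T (\<lambda>w. a * iter_pd vs f w + b * iter_pd vs g w)"
    using assms(2,3) vs unfolding smooth_on_def by (auto intro!: continuous_intros)
  then show "continuous_on T (iter_pd vs (\<lambda>w. a * f w + b * g w))"
    by (rule continuous_on_eq) (simp add: lincomb)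
  fix v z assume "v \<in> {1, \<i>}" "z \<in> T"
  then have "((\<lambda>t. iter_pd vs (\<lambda>w. a * f w + b * g w) (z + of_real t * v)) has_real_derivative
      a * pdir v (iter_pd vs f) z + b * pdir v (iter_pd vs g) z) (at 0)"
    using vs lincomb by (intro has_line_derivative_lincomb[OF assms(1)] smooth_on_line_differentiable[OF assms(2)]
        smooth_on_line_differentiable[OF assms(3)])
  then show "(\<lambda>t. iter_pd vs (\<lambda>w. a * f w + b * g w) (z + of_real t * v)) differentiable (at 0)"
    using real_differentiable_def by blast
qed

definition grad :: "(complex \<Rightarrow> real) \<Rightarrow> complex \<Rightarrow> complex" where
  "grad f z = Complex (pdir 1 f z) (pdir \<i> f z)"

lemma grad_lincomb:
  assumes "open T" "smooth_on T f" "smooth_on T g" "z \<in> T"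
  shows "grad (\<lambda>w. a * f w + b * g w) z = a *\<^sub>R grad f z + b *\<^sub>R grad g z"
  using iter_pd_lincomb[OF assms(1-3) _ assms(4), where vs = "[1]"]
    iter_pd_lincomb[OF assms(1-3) _ assms(4), where vs = "[\<i>]"]
  by (simp add: grad_def complex_eq_iff)

lemma laplacian_lincomb:
  assumes "open T" "smooth_on T f" "smooth_on T g" "z \<in> T"
  shows "laplacian (\<lambda>w. a * f w + b * g w) z = a * laplacian f z + b * laplacian g z"
  using iter_pd_lincomb[OF assms(1-3) _ assms(4), where vs = "[1, 1]"]
    iter_pd_lincomb[OF assms(1-3) _ assms(4), where vs = "[\<i>, \<i>]"]
  by (simp add: laplacian_def algebra_simps)

lemma pdir_ln:
  assumes "f z > 0" "(\<lambda>t. f (z + of_real t * v)) differentiable (at 0)"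
  shows "pdir v (\<lambda>w. ln (f w)) z = pdir v f z / f z"
proof (rule pdir_eqI)
  have "(ln has_real_derivative inverse (f z)) (at (f (z + of_real 0 * v)))"
    using DERIV_ln assms(1) by simp
  from DERIV_chain2[OF this has_real_derivative_pdir[OF assms(2)]]
  show "((\<lambda>t. ln (f (z + of_real t * v))) has_real_derivative pdir v f z / f z) (at 0)"
    by (simp add: field_simps)
qed

lemma pdir_pdir_ln:
  assumes "open T" "smooth_on T f" "\<And>w. w \<in> T \<Longrightarrow> f w > 0" "z \<in> T" "v \<in> {1, \<i>}"
  shows "pdir v (pdir v (\<lambda>w. ln (f w))) z = (f z * pdir v (pdir v f) z - (pdir v f z)^2) / (f z)^2"
proof (rule pdir_eqI)
  have "f z > 0" using assms(3,4) .
  have line_f: "(\<lambda>t. f (w + of_real t * v)) differentiable (at 0)" if "w \<in> T" for w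
    using smooth_on_line_differentiable[OF assms(2), where vs = "[]"] assms(5) that by simp
  have line_pdir_f: "(\<lambda>t. pdir v f (z + of_real t * v)) differentiable (at 0)"
    using smooth_on_line_differentiable[OF assms(2), where vs = "[v]"] assms(4,5) by simp
  have "((\<lambda>t. pdir v f (z + of_real t * v) / f (z + of_real t * v)) has_real_derivative
      (f z * pdir v (pdir v f) z - (pdir v f z)^2) / (f z)^2) (at 0)"
    using DERIV_divide[OF has_real_derivative_pdir[OF line_pdir_f]
        has_real_derivative_pdir[OF line_f[OF assms(4)]]] \<open>f z > 0\<close>
    by (simp add: power2_eq_square algebra_simps)
  then show "((\<lambda>t. pdir v (\<lambda>w. ln (f w)) (z + of_real t * v)) has_real_derivative
      (f z * pdir v (pdir v f) z - (pdir v f z)^2) / (f z)^2) (at 0)"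
    by (rule DERIV_line_cong_open[where f = "\<lambda>w. pdir v f w / f w", OF assms(1,4), rotated])
      (simp add: pdir_ln assms(3) line_f)
qed

lemma laplacian_ln:
  assumes "open T" "smooth_on T f" "\<And>w. w \<in> T \<Longrightarrow> f w > 0" "z \<in> T"
  shows "laplacian (\<lambda>w. ln (f w)) z = (f z * laplacian f z - (cmod (grad f z))^2) / (f z)^2"
  using pdir_pdir_ln[OF assms, of 1] pdir_pdir_ln[OF assms, of \<i>]
  by (simp add: laplacian_def grad_def cmod_power2 add_divide_distrib[symmetric] algebra_simps)

lemma gauss_curv_nonpos_iff:
  assumes "open T" "smooth_on T f" "\<And>w. w \<in> T \<Longrightarrow> f w > 0" "z \<in> T"
  shows "gauss_curv f z \<le> 0 \<longleftrightarrow> (cmod (grad f z))^2 \<le> f z * laplacian f z"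
proof -
  have "f z > 0" using assms(3,4) .
  have "laplacian (\<lambda>w. ln (f w)) z = (f z * laplacian f z - (cmod (grad f z))^2) / (f z)^2"
    by (rule laplacian_ln[OF assms])
  moreover have "0 < 2 * f z * (f z)^2" using \<open>f z > 0\<close> by simp
  ultimately show ?thesis
    unfolding gauss_curv_def by (simp add: divide_le_0_iff zero_le_divide_iff)
qed

lemma power2_norm_lincomb_le:
  fixes u1 u2 :: "'a::real_inner"
  assumes "g1 > 0" "g2 > 0" "a \<ge> 0" "b \<ge> 0"
    and "(norm u1)^2 \<le> g1 * L1" "(norm u2)^2 \<le> g2 * L2"
  shows "(norm (a *\<^sub>R u1 + b *\<^sub>R u2))^2 \<le> (a * g1 + b * g2) * (a * L1 + b * L2)"
proof -
  have "(norm (a *\<^sub>R u1 + b *\<^sub>R u2))^2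
      \<le> (norm (a *\<^sub>R u1 + b *\<^sub>R u2))^2 + a * b * (norm (g2 *\<^sub>R u1 - g1 *\<^sub>R u2))^2 / (g1 * g2)"
    using assms(1-4) by simp
  also have "\<dots> = (a * g1 + b * g2) * (a * ((norm u1)^2 / g1) + b * ((norm u2)^2 / g2))"
    unfolding power2_norm_eq_inner using assms(1,2)
    by (simp add: inner_add_left inner_add_right inner_diff_left inner_diff_right inner_commute field_simps)
  also have "\<dots> \<le> (a * g1 + b * g2) * (a * L1 + b * L2)"
    using assms by (intro mult_left_mono add_mono mult_left_mono) (simp_all add: pos_divide_le_eq mult.commute)
  finally show ?thesis .
qed

lemma gauss_curv_lincomb_nonpos:
  assumes "open T" "smooth_on T f" "smooth_on T g"
    and "\<And>w. w \<in> T \<Longrightarrow> f w > 0" "\<And>w. w \<in> T \<Longrightarrow> g w > 0"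
    and "a > 0" "b > 0" "z \<in> T" "gauss_curv f z \<le> 0" "gauss_curv g z \<le> 0"
  shows "gauss_curv (\<lambda>w. a * f w + b * g w) z \<le> 0"
proof -
  have lincomb_pos: "a * f w + b * g w > 0" if "w \<in> T" for w
    using assms(4-7) that by (simp add: add_pos_pos)
  have "(cmod (grad (\<lambda>w. a * f w + b * g w) z))^2 = (norm (a *\<^sub>R grad f z + b *\<^sub>R grad g z))^2"
    by (simp add: grad_lincomb[OF assms(1-3,8)])
  also have "\<dots> \<le> (a * f z + b * g z) * (a * laplacian f z + b * laplacian g z)"
    using assms(4-8) gauss_curv_nonpos_iff[OF assms(1,2,4,8)] gauss_curv_nonpos_iff[OF assms(1,3,5,8)] assms(9,10)
    by (intro power2_norm_lincomb_le) auto
  also have "\<dots> = (a * f z + b * g z) * laplacian (\<lambda>w. a * f w + b * g w) z"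
    by (simp add: laplacian_lincomb[OF assms(1-3,8)])
  finally show ?thesis
    using gauss_curv_nonpos_iff[OF assms(1) smooth_on_lincomb[OF assms(1-3)] lincomb_pos assms(8)] by simp
qed

definition conical_on_ball :: "complex \<Rightarrow> real \<Rightarrow> real \<Rightarrow> (complex \<Rightarrow> real) \<Rightarrow> bool" where
  "conical_on_ball p r \<beta> \<rho> \<longleftrightarrow>
     (\<exists>h. continuous_on (ball p r) h \<and>
       (\<forall>z\<in>ball p r - {p}. \<rho> z = exp (h z) * cmod (z - p) powr (2 * \<beta>)))"

lemma conical_on_ball_subset:
  assumes "conical_on_ball p r \<beta> \<rho>" "r' \<le> r"
  shows "conical_on_ball p r' \<beta> \<rho>"
proof -
  have "ball p r' \<subseteq> ball p r" using assms(2) by (rule subset_ball)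
  then show ?thesis using assms(1) unfolding conical_on_ball_def by (meson continuous_on_subset Diff_mono subset_refl subsetD)
qed

lemma conical_on_ball_of_positive:
  assumes "continuous_on (ball p r) \<rho>" "\<And>z. z \<in> ball p r \<Longrightarrow> \<rho> z > 0"
  shows "conical_on_ball p r 0 \<rho>"
  unfolding conical_on_ball_def
proof (intro exI conjI ballI)
  show "continuous_on (ball p r) (\<lambda>z. ln (\<rho> z))"
    using assms by (intro continuous_on_ln) (auto simp: less_imp_neq[THEN not_sym])
  show "\<rho> z = exp (ln (\<rho> z)) * cmod (z - p) powr (2 * 0)" if "z \<in> ball p r - {p}" for z
    using assms(2) that by simp
qed

(* The case split is forced by the junk value 0 powr 0 = 0, which makes |z - p| powr 0
   discontinuous at p. *)
lemma norm_powr_add_factor: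
  fixes p :: complex
  assumes "0 \<le> e"
  obtains d :: "complex \<Rightarrow> real" where "continuous_on UNIV d" "\<And>z. 0 \<le> d z"
    "\<And>z. z \<noteq> p \<Longrightarrow> cmod (z - p) powr (e + c) = d z * cmod (z - p) powr c"
proof (cases "e = 0")
  case True
  then show ?thesis by (intro that[of "\<lambda>_. 1"]) auto
next
  case False
  then show ?thesis
    using assms by (intro that[of "\<lambda>z. cmod (z - p) powr e"] continuous_on_powr')
      (auto intro!: continuous_intros simp: powr_add)
qed

lemma conical_on_ball_lincomb_le:
  assumes "conical_on_ball p r \<beta>1 \<rho>1" "conical_on_ball p r \<beta>2 \<rho>2" "\<beta>1 \<le> \<beta>2" "a > 0" "b > 0"
  shows "conical_on_ball p r \<beta>1 (\<lambda>z. a * \<rho>1 z + b * \<rho>2 z)"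
proof -
  obtain h1 where h1: "continuous_on (ball p r) h1"
    "\<And>z. z \<in> ball p r - {p} \<Longrightarrow> \<rho>1 z = exp (h1 z) * cmod (z - p) powr (2 * \<beta>1)"
    using assms(1) unfolding conical_on_ball_def by blast
  obtain h2 where h2: "continuous_on (ball p r) h2"
    "\<And>z. z \<in> ball p r - {p} \<Longrightarrow> \<rho>2 z = exp (h2 z) * cmod (z - p) powr (2 * \<beta>2)"
    using assms(2) unfolding conical_on_ball_def by blast
  obtain d where d: "continuous_on UNIV d" "\<And>z. 0 \<le> d z"
    "\<And>z. z \<noteq> p \<Longrightarrow> cmod (z - p) powr (2 * \<beta>2) = d z * cmod (z - p) powr (2 * \<beta>1)"
    using norm_powr_add_factor[of "2 * (\<beta>2 - \<beta>1)" p "2 * \<beta>1"] assms(3) by auto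
  have pos: "a * exp (h1 z) + b * exp (h2 z) * d z > 0" for z
    using assms(4,5) d(2)[of z] by (simp add: add_pos_nonneg)
  define h where "h z = ln (a * exp (h1 z) + b * exp (h2 z) * d z)" for z
  have "continuous_on (ball p r) h"
    unfolding h_def using h1(1) h2(1) continuous_on_subset[OF d(1)] pos[THEN less_imp_neq[THEN not_sym]]
    by (intro continuous_on_ln continuous_intros) auto
  moreover have "a * \<rho>1 z + b * \<rho>2 z = exp (h z) * cmod (z - p) powr (2 * \<beta>1)"
    if "z \<in> ball p r - {p}" for z
    using h1(2)[OF that] h2(2)[OF that] d(3)[of z] that pos[of z] by (simp add: h_def algebra_simps)
  ultimately show ?thesis
    unfolding conical_on_ball_def by blast
qed

lemma conical_on_ball_lincomb:
  assumes "conical_on_ball p r \<beta>1 \<rho>1" "conical_on_ball p r \<beta>2 \<rho>2" "a > 0" "b > 0"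
  shows "conical_on_ball p r (min \<beta>1 \<beta>2) (\<lambda>z. a * \<rho>1 z + b * \<rho>2 z)"
proof (cases "\<beta>1 \<le> \<beta>2")
  case True
  then show ?thesis using conical_on_ball_lincomb_le[OF assms(1,2) True assms(3,4)] by simp
next
  case False
  then have "conical_on_ball p r \<beta>2 (\<lambda>z. b * \<rho>2 z + a * \<rho>1 z)"
    using conical_on_ball_lincomb_le[OF assms(2,1) _ assms(4,3)] by simp
  then show ?thesis using False by (simp add: add.commute)
qed

lemma cat0_conformal_metric_conical_on_ball:
  assumes "open U" "cat0_conformal_metric U \<rho>" "p \<in> U"
  obtains \<beta> r where "\<beta> \<ge> 0" "r > 0" "ball p r \<subseteq> U" "conical_on_ball p r \<beta> \<rho>"
proof -
  obtain S where S: "finite S" "\<forall>z\<in>U - S. \<rho> z > 0" "smooth_on (U - S) \<rho>"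
    "\<forall>q\<in>S. \<exists>\<beta>::real. \<beta> \<ge> 0 \<and> (\<exists>r>0. \<exists>h::complex \<Rightarrow> real.
        ball q r \<subseteq> U \<and> continuous_on (ball q r) h \<and>
        (\<forall>z\<in>ball q r - {q}. \<rho> z = exp (h z) * cmod (z - q) powr (2 * \<beta>)))"
    using assms(2) unfolding cat0_conformal_metric_def by blast
  show ?thesis
  proof (cases "p \<in> S")
    case True
    then obtain \<beta> r h where "\<beta> \<ge> 0" "r > 0" "ball p r \<subseteq> U" "continuous_on (ball p r) h"
        "\<forall>z\<in>ball p r - {p}. \<rho> z = exp (h z) * cmod (z - p) powr (2 * \<beta>)"
      using S(4) by blast
    then show ?thesis using that unfolding conical_on_ball_def by blast
  next
    case False
    have "open (U - S)" using assms(1) S(1) by (simp add: finite_imp_closed open_Diff)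
    then obtain r where r: "r > 0" "ball p r \<subseteq> U - S"
      using False assms(3) open_contains_ball by blast
    have "continuous_on (ball p r) \<rho>"
      using continuous_on_subset[OF smooth_on_imp_continuous_on[OF S(3)] r(2)] .
    then have "conical_on_ball p r 0 \<rho>"
      by (rule conical_on_ball_of_positive) (use S(2) r(2) in blast)
    then show ?thesis using r that[of 0 r] by auto
  qed
qed

lemma cat0_conformal_metric_lincomb_conical_on_ball:
  assumes "open U" "cat0_conformal_metric U \<rho>1" "cat0_conformal_metric U \<rho>2" "a > 0" "b > 0" "p \<in> U"
  obtains \<beta> r where "\<beta> \<ge> 0" "r > 0" "ball p r \<subseteq> U"
    "conical_on_ball p r \<beta> (\<lambda>z. a * \<rho>1 z + b * \<rho>2 z)"
proof -
  obtain \<beta>1 r1 where 1: "\<beta>1 \<ge> 0" "r1 > 0" "ball p r1 \<subseteq> U" "conical_on_ball p r1 \<beta>1 \<rho>1"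
    using cat0_conformal_metric_conical_on_ball[OF assms(1,2,6)] .
  obtain \<beta>2 r2 where 2: "\<beta>2 \<ge> 0" "r2 > 0" "ball p r2 \<subseteq> U" "conical_on_ball p r2 \<beta>2 \<rho>2"
    using cat0_conformal_metric_conical_on_ball[OF assms(1,3,6)] .
  show ?thesis
  proof (rule that)
    show "min \<beta>1 \<beta>2 \<ge> 0" "min r1 r2 > 0" "ball p (min r1 r2) \<subseteq> U"
      using 1(1-3) 2(1,2) by auto
    show "conical_on_ball p (min r1 r2) (min \<beta>1 \<beta>2) (\<lambda>z. a * \<rho>1 z + b * \<rho>2 z)"
      using conical_on_ball_subset[OF 1(4), of "min r1 r2"] conical_on_ball_subset[OF 2(4), of "min r1 r2"]
      by (intro conical_on_ball_lincomb assms(4,5)) auto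
  qed
qed

lemma cat0_conformal_metric_lincomb:
  assumes "open U" "cat0_conformal_metric U \<rho>1" "cat0_conformal_metric U \<rho>2" "a > 0" "b > 0"
  shows "cat0_conformal_metric U (\<lambda>z. a * \<rho>1 z + b * \<rho>2 z)"
proof -
  obtain S1 where S1: "finite S1" "S1 \<subseteq> U" "\<forall>z\<in>U - S1. \<rho>1 z > 0" "smooth_on (U - S1) \<rho>1"
    "\<forall>z\<in>U - S1. gauss_curv \<rho>1 z \<le> 0"
    using assms(2) unfolding cat0_conformal_metric_def by blast
  obtain S2 where S2: "finite S2" "S2 \<subseteq> U" "\<forall>z\<in>U - S2. \<rho>2 z > 0" "smooth_on (U - S2) \<rho>2"
    "\<forall>z\<in>U - S2. gauss_curv \<rho>2 z \<le> 0"
    using assms(3) unfolding cat0_conformal_metric_def by blast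
  define T where "T = U - (S1 \<union> S2)"
  have T: "open T" using assms(1) S1(1) S2(1) by (simp add: T_def finite_imp_closed open_Diff)
  have smooth: "smooth_on T \<rho>1" "smooth_on T \<rho>2"
    by (rule smooth_on_subset[OF S1(4)] smooth_on_subset[OF S2(4)]; auto simp: T_def)+
  have pos: "\<And>w. w \<in> T \<Longrightarrow> \<rho>1 w > 0" "\<And>w. w \<in> T \<Longrightarrow> \<rho>2 w > 0"
    using S1(3) S2(3) by (auto simp: T_def)
  have curv: "\<And>w. w \<in> T \<Longrightarrow> gauss_curv \<rho>1 w \<le> 0" "\<And>w. w \<in> T \<Longrightarrow> gauss_curv \<rho>2 w \<le> 0"
    using S1(5) S2(5) by (auto simp: T_def)
  show ?thesis
    unfolding cat0_conformal_metric_def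
  proof (intro exI[of _ "S1 \<union> S2"] conjI)
    show "finite (S1 \<union> S2)" "S1 \<union> S2 \<subseteq> U" using S1(1,2) S2(1,2) by auto
    show "\<forall>z\<in>U - (S1 \<union> S2). a * \<rho>1 z + b * \<rho>2 z > 0"
      using pos assms(4,5) by (simp add: T_def add_pos_pos)
    show "smooth_on (U - (S1 \<union> S2)) (\<lambda>z. a * \<rho>1 z + b * \<rho>2 z)"
      using smooth_on_lincomb[OF T smooth] by (simp add: T_def)
    show "\<forall>z\<in>U - (S1 \<union> S2). gauss_curv (\<lambda>z. a * \<rho>1 z + b * \<rho>2 z) z \<le> 0"
      using gauss_curv_lincomb_nonpos[OF T smooth pos assms(4,5) _ curv] by (simp add: T_def)
    show "\<forall>p\<in>S1 \<union> S2. \<exists>\<beta>\<ge>0. \<exists>r>0. \<exists>h. ball p r \<subseteq> U \<and> continuous_on (ball p r) h \<and>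
        (\<forall>z\<in>ball p r - {p}. a * \<rho>1 z + b * \<rho>2 z = exp (h z) * cmod (z - p) powr (2 * \<beta>))"
    proof
      fix p assume "p \<in> S1 \<union> S2"
      then have "p \<in> U" using S1(2) S2(2) by blast
      then obtain \<beta> r where "\<beta> \<ge> 0" "r > 0" "ball p r \<subseteq> U"
          "conical_on_ball p r \<beta> (\<lambda>z. a * \<rho>1 z + b * \<rho>2 z)"
        using cat0_conformal_metric_lincomb_conical_on_ball[OF assms] by blast
      then show "\<exists>\<beta>\<ge>0. \<exists>r>0. \<exists>h. ball p r \<subseteq> U \<and> continuous_on (ball p r) h \<and>
          (\<forall>z\<in>ball p r - {p}. a * \<rho>1 z + b * \<rho>2 z = exp (h z) * cmod (z - p) powr (2 * \<beta>))"
        unfolding conical_on_ball_def by blast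
    qed
  qed
qed

theorem lemma4p2:
  fixes U :: "complex set" and g1 g2 :: "complex \<Rightarrow> real"
  assumes "open U"
    and "cat0_conformal_metric U g1"
    and "cat0_conformal_metric U g2"
  shows "cat0_conformal_metric U (\<lambda>z. (g1 z + g2 z) / 2)"
proof -
  have "(\<lambda>z. (g1 z + g2 z) / 2) = (\<lambda>z. 1/2 * g1 z + 1/2 * g2 z)" by auto
  then show ?thesis using cat0_conformal_metric_lincomb[OF assms, of "1/2" "1/2"] by simp
qed

end
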